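(* Let $T_1$ and $T_2$ be two nontrivial trees with orders $m$ and $n$ respectively. Then $hn_{cc}(T_1\Box T_2)=m+n-1$.
   Context: All graphs are finite, simple and undirected. For a graph $G$ and $S\subseteq V(G)$, the cycle interval $\langle S\rangle$ consists of the vertices of $S$ together with every vertex $w\in V(G)\setminus S$ such that $G[S\cup\{w\}]$ contains a cycle through $w$; $S$ is cycle convex if $\langle S\rangle=S$; the cycle convex hull $\langle S\rangle_C$ is the smallest cycle convex set containing $S$; a hull set is a set $S$ with $\langle S\rangle_C=V(G)$, and $hn_{cc}(G)$ is the minimum cardinality of a hull set. The Cartesian product $G\Box H$ has vertex set $V(G)\times V(H)$, with $(g_1,h_1)\sim(g_2,h_2)$ iff ($g_1\sim g_2$ and $h_1=h_2$) or ($g_1=g_2$ and $h_1\sim h_2$). A tree is nontrivial if it has at least two vertices. *)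

theory Defs
  imports Main
begin

definition simple_graph :: "'a set \<Rightarrow> ('a \<Rightarrow> 'a \<Rightarrow> bool) \<Rightarrow> bool" where
  "simple_graph V E \<longleftrightarrow> finite V \<and> (\<forall>u v. E u v \<longrightarrow> E v u) \<and> (\<forall>v. \<not> E v v)
     \<and> (\<forall>u v. E u v \<longrightarrow> u \<in> V \<and> v \<in> V)"

definition is_cycle :: "('a \<Rightarrow> 'a \<Rightarrow> bool) \<Rightarrow> 'a list \<Rightarrow> bool" where
  "is_cycle E cs \<longleftrightarrow> length cs \<ge> 3 \<and> distinct cs \<and>
     (\<forall>i < length cs. E (cs ! i) (cs ! ((i + 1) mod length cs)))"

definition is_walk :: "'a set \<Rightarrow> ('a \<Rightarrow> 'a \<Rightarrow> bool) \<Rightarrow> 'a list \<Rightarrow> bool" where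
  "is_walk V E xs \<longleftrightarrow> xs \<noteq> [] \<and> set xs \<subseteq> V \<and>
     (\<forall>i. i + 1 < length xs \<longrightarrow> E (xs ! i) (xs ! (i + 1)))"

definition connected_graph :: "'a set \<Rightarrow> ('a \<Rightarrow> 'a \<Rightarrow> bool) \<Rightarrow> bool" where
  "connected_graph V E \<longleftrightarrow> V \<noteq> {} \<and>
     (\<forall>u\<in>V. \<forall>v\<in>V. \<exists>xs. is_walk V E xs \<and> hd xs = u \<and> last xs = v)"

definition is_tree :: "'a set \<Rightarrow> ('a \<Rightarrow> 'a \<Rightarrow> bool) \<Rightarrow> bool" where
  "is_tree V E \<longleftrightarrow> simple_graph V E \<and> connected_graph V E \<and> (\<nexists>cs. is_cycle E cs)"

definition cycle_interval :: "'a set \<Rightarrow> ('a \<Rightarrow> 'a \<Rightarrow> bool) \<Rightarrow> 'a set \<Rightarrow> 'a set" where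
  "cycle_interval V E S = S \<union> {w \<in> V - S. \<exists>cs. is_cycle E cs \<and> set cs \<subseteq> S \<union> {w} \<and> w \<in> set cs}"

definition cycle_convex :: "'a set \<Rightarrow> ('a \<Rightarrow> 'a \<Rightarrow> bool) \<Rightarrow> 'a set \<Rightarrow> bool" where
  "cycle_convex V E S \<longleftrightarrow> S \<subseteq> V \<and> cycle_interval V E S = S"

definition cycle_hull :: "'a set \<Rightarrow> ('a \<Rightarrow> 'a \<Rightarrow> bool) \<Rightarrow> 'a set \<Rightarrow> 'a set" where
  "cycle_hull V E S = \<Inter> {C. S \<subseteq> C \<and> cycle_convex V E C}"

definition cc_hull_set :: "'a set \<Rightarrow> ('a \<Rightarrow> 'a \<Rightarrow> bool) \<Rightarrow> 'a set \<Rightarrow> bool" where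
  "cc_hull_set V E S \<longleftrightarrow> S \<subseteq> V \<and> cycle_hull V E S = V"

definition hn_cc :: "'a set \<Rightarrow> ('a \<Rightarrow> 'a \<Rightarrow> bool) \<Rightarrow> nat" where
  "hn_cc V E = (LEAST k. \<exists>S. cc_hull_set V E S \<and> card S = k)"

definition cart_adj :: "('a \<Rightarrow> 'a \<Rightarrow> bool) \<Rightarrow> ('b \<Rightarrow> 'b \<Rightarrow> bool) \<Rightarrow> ('a \<times> 'b) \<Rightarrow> ('a \<times> 'b) \<Rightarrow> bool" where
  "cart_adj E1 E2 p q \<longleftrightarrow> (E1 (fst p) (fst q) \<and> snd p = snd q) \<or> (fst p = fst q \<and> E2 (snd p) (snd q))"

end

theory Submission
  imports Defs "HOL-Library.Transitive_Closure_Table"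
begin

text \<open>
  Upper bound: for \<open>a \<in> V1\<close> and \<open>b \<in> V2\<close>, the cross \<open>{a} \<times> V2 \<union> V1 \<times> {b}\<close> of \<open>m + n - 1\<close>
  vertices is a hull set, because a cycle convex set containing three corners of a 4-cycle
  \<open>(x, y), (x', y), (x, y'), (x', y')\<close> contains the fourth, and growing along the two trees
  fills the whole product.

  Lower bound: read a vertex set \<open>S\<close> of the product as the edge set of a bipartite graph
  \<open>B(S)\<close> on \<open>V1 <+> V2\<close>, joining \<open>a\<close> and \<open>b\<close> when \<open>(a, b) \<in> S\<close>. The vertices \<open>(a, b)\<close> with
  \<open>a\<close> and \<open>b\<close> in one component of \<open>B(S)\<close> form a cycle convex set. Indeed, if a cycle
  leaves this set only at \<open>w\<close>, the rest of it is a walk inside the set. Unless a cycle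
  neighbour of \<open>w\<close> already shares a coordinate with \<open>w\<close>, the projection of this walk to that
  tree is a lazy walk between two distinct neighbours of the coordinate of \<open>w\<close>, and in a tree
  it must pass through that coordinate. So both coordinates of \<open>w\<close> occur on the walk, and
  consecutive vertices of the walk share a coordinate, which puts them in one component.
  Hence for a hull set \<open>S\<close> the graph \<open>B(S)\<close> is connected, and a connected graph on
  \<open>m + n\<close> vertices has at least \<open>m + n - 1\<close> edges.
\<close>

lemma is_cycle_rotate:
  assumes "is_cycle E cs"
  shows "is_cycle E (rotate k cs)"
proof -
  let ?L = "length cs"
  have L: "?L \<ge> 3" and edge: "\<And>j. j < ?L \<Longrightarrow> E (cs ! j) (cs ! ((j + 1) mod ?L))"
    using assms unfolding is_cycle_def by auto
  have "E (rotate k cs ! i) (rotate k cs ! ((i + 1) mod ?L))" if "i < ?L" for i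
  proof -
    have j: "(k + i) mod ?L < ?L" and "(i + 1) mod ?L < ?L"
      using L by (auto intro: mod_less_divisor)
    then have "rotate k cs ! ((i + 1) mod ?L) = cs ! ((k + (i + 1) mod ?L) mod ?L)"
      by (intro nth_rotate)
    also have "\<dots> = cs ! (((k + i) mod ?L + 1) mod ?L)"
      by (simp add: mod_simps add.assoc)
    finally show ?thesis
      using edge[OF j] that by (simp add: nth_rotate)
  qed
  then show ?thesis
    using assms unfolding is_cycle_def by simp
qed

lemma is_cycle_through:
  assumes "is_cycle E cs" and "w \<in> set cs"
  obtains ps where "is_cycle E (w # ps)" and "set (w # ps) = set cs"
proof -
  obtain k where k: "k < length cs" "cs ! k = w"
    using assms(2) by (metis in_set_conv_nth)
  then have "cs \<noteq> []"
    by auto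
  with k have "hd (rotate k cs) = w" and "rotate k cs \<noteq> []"
    by (auto simp: hd_rotate_conv_nth)
  then obtain ps where ps: "rotate k cs = w # ps"
    by (cases "rotate k cs") auto
  show ?thesis
  proof
    show "is_cycle E (w # ps)"
      using is_cycle_rotate[OF assms(1), of k] unfolding ps .
    show "set (w # ps) = set cs"
      by (metis ps set_rotate)
  qed
qed

lemma is_cycle_ConsD:
  assumes "is_cycle E (w # ps)"
  shows "length ps \<ge> 2" and "distinct ps" and "w \<notin> set ps"
    and "E w (ps ! 0)" and "E (ps ! (length ps - 1)) w"
    and "\<And>i. Suc i < length ps \<Longrightarrow> E (ps ! i) (ps ! Suc i)"
proof -
  have edge: "\<And>i. i \<le> length ps \<Longrightarrow> E ((w # ps) ! i) ((w # ps) ! ((i + 1) mod Suc (length ps)))"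
    using assms unfolding is_cycle_def by auto
  show "length ps \<ge> 2" "distinct ps" "w \<notin> set ps"
    using assms unfolding is_cycle_def by auto
  then have "ps \<noteq> []"
    by auto
  then show "E w (ps ! 0)" and "E (ps ! (length ps - 1)) w"
    using edge[of 0] edge[of "length ps"] by (auto simp: nth_Cons')
  show "E (ps ! i) (ps ! Suc i)" if "Suc i < length ps" for i
    using edge[of "Suc i"] that by simp
qed

lemma acyclic_common_neighbour_separates:
  assumes "simple_graph V E" and acyclic: "\<nexists>cs. is_cycle E cs"
    and "E a a1" and "E a a2" and "a1 \<noteq> a2"
  shows "\<not> (\<lambda>x y. E x y \<and> x \<noteq> a \<and> y \<noteq> a)\<^sup>*\<^sup>* a1 a2"
proof
  define r where "r x y \<longleftrightarrow> E x y \<and> x \<noteq> a \<and> y \<noteq> a" for x y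
  assume "r\<^sup>*\<^sup>* a1 a2"
  then obtain ys where path: "rtrancl_path r a1 ys a2" and dist: "distinct (a1 # ys)"
    by (metis rtranclp_eq_rtrancl_path rtrancl_path_distinct)
  have sym: "\<And>x y. E x y \<Longrightarrow> E y x" and "a1 \<noteq> a"
    using assms(1,3) unfolding simple_graph_def by auto
  have "ys \<noteq> []"
    using path \<open>a1 \<noteq> a2\<close> by (auto elim: rtrancl_path.cases)
  have "a \<notin> set ys"
    using rtrancl_path_Range[OF path] unfolding r_def by blast
  have "is_cycle E (a # a1 # ys)"
    unfolding is_cycle_def
  proof (intro conjI allI impI)
    show "3 \<le> length (a # a1 # ys)"
      using \<open>ys \<noteq> []\<close> by (cases ys) auto
    show "distinct (a # a1 # ys)"
      using \<open>a \<notin> set ys\<close> \<open>a1 \<noteq> a\<close> dist by auto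
    fix i assume i: "i < length (a # a1 # ys)"
    consider "i = 0" | j where "i = Suc j" "j < length ys" | "i = Suc (length ys)"
      using i by (cases i) (auto simp: less_Suc_eq)
    then show "E ((a # a1 # ys) ! i) ((a # a1 # ys) ! ((i + 1) mod length (a # a1 # ys)))"
    proof cases
      case 1
      then show ?thesis using \<open>E a a1\<close> by simp
    next
      case (2 j)
      then show ?thesis using rtrancl_path_nth[OF path, of j] unfolding r_def by simp
    next
      case 3
      have "(a1 # ys) ! length ys = a2"
        using rtrancl_path_last[OF path \<open>ys \<noteq> []\<close>] \<open>ys \<noteq> []\<close> by (simp add: last_conv_nth)
      then show ?thesis using 3 sym[OF \<open>E a a2\<close>] by simp
    qed
  qed
  with acyclic show False by blast
qed

lemma acyclic_lazy_walk_through_common_neighbour: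
  assumes "simple_graph V E" and "\<nexists>cs. is_cycle E cs"
    and "E a (g 0)" and "E a (g N)" and "g 0 \<noteq> g N"
    and walk: "\<And>i. i < N \<Longrightarrow> E (g i) (g (Suc i)) \<or> g i = g (Suc i)"
  shows "\<exists>i\<le>N. g i = a"
proof (rule ccontr)
  define r where "r x y \<longleftrightarrow> E x y \<and> x \<noteq> a \<and> y \<noteq> a" for x y
  assume avoid: "\<not> (\<exists>i\<le>N. g i = a)"
  have "r\<^sup>*\<^sup>* (g 0) (g i)" if "i \<le> N" for i
    using that
  proof (induction i)
    case (Suc i)
    then have "g i \<noteq> a" and "g (Suc i) \<noteq> a"
      using avoid by auto
    then have "r\<^sup>*\<^sup>* (g i) (g (Suc i))"
      using walk[of i] Suc.prems unfolding r_def by (auto intro: r_into_rtranclp)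
    with Suc show ?case
      by (meson Suc_leD rtranclp_trans)
  qed simp
  then show False
    using acyclic_common_neighbour_separates[OF assms(1-5)] unfolding r_def by blast
qed

lemma is_tree_finite: "is_tree V E \<Longrightarrow> finite V"
  unfolding is_tree_def simple_graph_def by simp

lemma is_tree_nonempty: "is_tree V E \<Longrightarrow> V \<noteq> {}"
  unfolding is_tree_def connected_graph_def by simp

lemma connected_graph_induct:
  assumes "connected_graph V E" and "x0 \<in> V" and "x \<in> V" and "P x0"
    and step: "\<And>x y. E x y \<Longrightarrow> x \<in> V \<Longrightarrow> y \<in> V \<Longrightarrow> P x \<Longrightarrow> P y"
  shows "P x"
proof -
  obtain xs where walk: "is_walk V E xs" and "hd xs = x0" and "last xs = x"
    using assms(1-3) unfolding connected_graph_def by blast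
  then have "xs \<noteq> []" and "set xs \<subseteq> V"
    unfolding is_walk_def by auto
  have "P (xs ! i)" if "i < length xs" for i
    using that
  proof (induction i)
    case 0
    then show ?case using \<open>hd xs = x0\<close> \<open>xs \<noteq> []\<close> \<open>P x0\<close> by (simp add: hd_conv_nth)
  next
    case (Suc i)
    then have "xs ! i \<in> V" and "xs ! Suc i \<in> V"
      using \<open>set xs \<subseteq> V\<close> nth_mem by (metis Suc_lessD subsetD)+
    with Suc show ?case
      using step[of "xs ! i" "xs ! Suc i"] walk unfolding is_walk_def by auto
  qed
  moreover have "last xs = xs ! (length xs - 1)" and "length xs - 1 < length xs"
    using \<open>xs \<noteq> []\<close> by (auto simp: last_conv_nth)
  ultimately show ?thesis
    using \<open>last xs = x\<close> by metis
qed

lemma cc_hull_setI: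
  assumes "S \<subseteq> V" and "\<And>C. S \<subseteq> C \<Longrightarrow> cycle_convex V E C \<Longrightarrow> V \<subseteq> C"
  shows "cc_hull_set V E S"
proof -
  have "cycle_convex V E V"
    unfolding cycle_convex_def cycle_interval_def by auto
  with assms show ?thesis
    unfolding cc_hull_set_def cycle_hull_def by blast
qed

lemma cc_hull_setD:
  assumes "cc_hull_set V E S" and "S \<subseteq> C" and "cycle_convex V E C"
  shows "V \<subseteq> C"
  using assms unfolding cc_hull_set_def cycle_hull_def by blast

lemma cart_adj_sym:
  assumes "simple_graph V1 E1" and "simple_graph V2 E2" and "cart_adj E1 E2 x y"
  shows "cart_adj E1 E2 y x"
  using assms unfolding simple_graph_def cart_adj_def by auto

lemma cycle_convex_square:
  assumes convex: "cycle_convex (V1 \<times> V2) (cart_adj E1 E2) C"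
    and "simple_graph V1 E1" and "simple_graph V2 E2"
    and "E1 x x'" and "E2 y y'"
    and "(x, y) \<in> C" and "(x', y) \<in> C" and "(x, y') \<in> C"
  shows "(x', y') \<in> C"
proof (rule ccontr)
  assume out: "(x', y') \<notin> C"
  let ?cs = "[(x, y), (x', y), (x', y'), (x, y')]"
  have "x \<noteq> x'" and "y \<noteq> y'" and "(x', y') \<in> V1 \<times> V2"
    using assms(2-5) unfolding simple_graph_def by auto
  have "is_cycle (cart_adj E1 E2) ?cs"
    unfolding is_cycle_def
  proof (intro conjI allI impI)
    fix i assume "i < length ?cs"
    then have "i = 0 \<or> i = 1 \<or> i = 2 \<or> i = 3"
      by auto
    then show "cart_adj E1 E2 (?cs ! i) (?cs ! ((i + 1) mod length ?cs))"
      using assms(2-5) unfolding simple_graph_def cart_adj_def by auto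
  qed (use \<open>x \<noteq> x'\<close> \<open>y \<noteq> y'\<close> in auto)
  moreover have "set ?cs \<subseteq> C \<union> {(x', y')}"
    using assms(6-8) by auto
  ultimately have "(x', y') \<in> cycle_interval (V1 \<times> V2) (cart_adj E1 E2) C"
    unfolding cycle_interval_def using out \<open>(x', y') \<in> V1 \<times> V2\<close> by auto
  with convex out show False
    unfolding cycle_convex_def by auto
qed

lemma cycle_convex_cross_subset:
  assumes "simple_graph V1 E1" "connected_graph V1 E1"
    and "simple_graph V2 E2" "connected_graph V2 E2"
    and convex: "cycle_convex (V1 \<times> V2) (cart_adj E1 E2) C"
    and "a0 \<in> V1" and "b0 \<in> V2" and cross: "{a0} \<times> V2 \<union> V1 \<times> {b0} \<subseteq> C"
  shows "V1 \<times> V2 \<subseteq> C"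
proof -
  have "{a} \<times> V2 \<subseteq> C" if "a \<in> V1" for a
    using assms(2,6) that
  proof (rule connected_graph_induct)
    show "{a0} \<times> V2 \<subseteq> C"
      using cross by auto
    fix x x' assume "E1 x x'" and "x' \<in> V1" and row: "{x} \<times> V2 \<subseteq> C"
    have "(x', b) \<in> C" if "b \<in> V2" for b
      using assms(4,7) that
    proof (rule connected_graph_induct)
      show "(x', b0) \<in> C"
        using cross \<open>x' \<in> V1\<close> by auto
      fix y y' assume "E2 y y'" "y \<in> V2" "y' \<in> V2" "(x', y) \<in> C"
      then show "(x', y') \<in> C"
        using cycle_convex_square[OF convex assms(1,3) \<open>E1 x x'\<close>] row by auto
    qed
    then show "{x'} \<times> V2 \<subseteq> C"
      by auto
  qed
  then show ?thesis
    by auto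
qed

lemma cross_hull_set:
  assumes "is_tree V1 E1" and "is_tree V2 E2" and "a0 \<in> V1" and "b0 \<in> V2"
  shows "cc_hull_set (V1 \<times> V2) (cart_adj E1 E2) ({a0} \<times> V2 \<union> V1 \<times> {b0})"
  using assms cycle_convex_cross_subset[of V1 E1 V2 E2]
  by (intro cc_hull_setI) (auto simp: is_tree_def)

lemma card_cross:
  assumes "finite V1" and "finite V2" and "a0 \<in> V1" and "b0 \<in> V2"
  shows "card ({a0} \<times> V2 \<union> V1 \<times> {b0}) = card V1 + card V2 - 1"
proof -
  have "({a0} \<times> V2) \<inter> (V1 \<times> {b0}) = {(a0, b0)}"
    using assms by auto
  then show ?thesis
    using card_Un_Int[of "{a0} \<times> V2" "V1 \<times> {b0}"] assms by (simp add: card_cartesian_product)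
qed

definition coord_rel :: "('a \<times> 'b) set \<Rightarrow> ('a + 'b) rel" where
  "coord_rel X = {(Inl a, Inr b) | a b. (a, b) \<in> X} \<union> {(Inr b, Inl a) | a b. (a, b) \<in> X}"

lemma coord_rel_rtrancl_sym:
  "(u, v) \<in> (coord_rel X)\<^sup>* \<Longrightarrow> (v, u) \<in> (coord_rel X)\<^sup>*"
  by (rule symD[OF sym_rtrancl]) (auto simp: sym_def coord_rel_def)

lemma coord_rel_pairI:
  "x \<in> X \<Longrightarrow> (Inl (fst x), Inr (snd x)) \<in> coord_rel X"
  "x \<in> X \<Longrightarrow> (Inr (snd x), Inl (fst x)) \<in> coord_rel X"
  unfolding coord_rel_def by (cases x; auto)+

lemma coord_rel_shared_coord:
  assumes "x \<in> X" and "y \<in> X" and "fst x = fst y \<or> snd x = snd y"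
  shows "(Inl (fst x), Inl (fst y)) \<in> (coord_rel X)\<^sup>*"
  using assms coord_rel_pairI[of x X] coord_rel_pairI[of y X]
  by (auto intro: rtrancl_into_rtrancl)

lemma coord_rel_walk:
  assumes inX: "\<And>i. i \<le> N \<Longrightarrow> f i \<in> X"
    and walk: "\<And>i. i < N \<Longrightarrow> cart_adj E1 E2 (f i) (f (Suc i))" and "i \<le> N"
  shows "(Inl (fst (f 0)), Inl (fst (f i))) \<in> (coord_rel X)\<^sup>*"
  using \<open>i \<le> N\<close>
proof (induction i)
  case (Suc i)
  then have "(Inl (fst (f i)), Inl (fst (f (Suc i)))) \<in> (coord_rel X)\<^sup>*"
    using coord_rel_shared_coord[OF inX inX] walk[of i] unfolding cart_adj_def by auto
  with Suc show ?case
    by (meson Suc_leD rtrancl_trans)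
qed simp

lemma cart_adj_swap:
  "cart_adj E2 E1 (prod.swap x) (prod.swap y) \<longleftrightarrow> cart_adj E1 E2 x y"
  unfolding cart_adj_def by auto

lemma cart_walk_meets_fst:
  assumes "simple_graph V1 E1" and "\<nexists>cs. is_cycle E1 cs"
    and "cart_adj E1 E2 w (f 0)" and "cart_adj E1 E2 w (f N)" and "f 0 \<noteq> f N"
    and walk: "\<And>i. i < N \<Longrightarrow> cart_adj E1 E2 (f i) (f (Suc i))"
  shows "\<exists>i\<le>N. fst (f i) = fst w"
proof (cases "fst (f 0) = fst w \<or> fst (f N) = fst w")
  case True
  then show ?thesis
    by blast
next
  case False
  with assms(3-5) have "E1 (fst w) (fst (f 0))" and "E1 (fst w) (fst (f N))"
    and "fst (f 0) \<noteq> fst (f N)"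
    unfolding cart_adj_def by (auto simp: prod_eq_iff)
  moreover have "E1 (fst (f i)) (fst (f (Suc i))) \<or> fst (f i) = fst (f (Suc i))" if "i < N" for i
    using walk[OF that] unfolding cart_adj_def by auto
  ultimately show ?thesis
    using acyclic_lazy_walk_through_common_neighbour[OF assms(1,2), of "fst w" "\<lambda>i. fst (f i)" N]
    by blast
qed

lemma cart_walk_meets_snd:
  assumes "simple_graph V2 E2" and "\<nexists>cs. is_cycle E2 cs"
    and "cart_adj E1 E2 w (f 0)" and "cart_adj E1 E2 w (f N)" and "f 0 \<noteq> f N"
    and "\<And>i. i < N \<Longrightarrow> cart_adj E1 E2 (f i) (f (Suc i))"
  shows "\<exists>i\<le>N. snd (f i) = snd w"
  using cart_walk_meets_fst[OF assms(1,2), of E1 "prod.swap w" "prod.swap \<circ> f" N] assms(3-6)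
  by (simp add: cart_adj_swap inj_eq)

lemma coord_rel_connects_cycle_vertex:
  assumes "simple_graph V1 E1" and "\<nexists>cs. is_cycle E1 cs"
    and "simple_graph V2 E2" and "\<nexists>cs. is_cycle E2 cs"
    and "is_cycle (cart_adj E1 E2) cs" and "w \<in> set cs"
    and "set cs \<subseteq> insert w X" and "w \<notin> X"
  shows "(Inl (fst w), Inr (snd w)) \<in> (coord_rel X)\<^sup>*"
proof -
  obtain ps where cyc: "is_cycle (cart_adj E1 E2) (w # ps)" and "set (w # ps) = set cs"
    using is_cycle_through[OF assms(5,6)] .
  define N where "N = length ps - 1"
  note path = is_cycle_ConsD[OF cyc, folded N_def]
  have "ps ! 0 \<noteq> ps ! N"
    using nth_eq_iff_index_eq[OF path(2), of 0 N] path(1) unfolding N_def by (cases ps) auto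
  have "set ps \<subseteq> X"
    using assms(7) \<open>set (w # ps) = set cs\<close> path(3) by auto
  then have inX: "ps ! i \<in> X" if "i \<le> N" for i
    using that path(1) unfolding N_def by auto
  have walk: "cart_adj E1 E2 (ps ! i) (ps ! Suc i)" if "i < N" for i
    using path(6) that unfolding N_def by auto
  have ends: "cart_adj E1 E2 w (ps ! 0)" "cart_adj E1 E2 w (ps ! N)"
    using path(4,5) cart_adj_sym[OF assms(1,3)] by auto
  obtain i where "i \<le> N" "fst (ps ! i) = fst w"
    using cart_walk_meets_fst[OF assms(1,2) ends \<open>ps ! 0 \<noteq> ps ! N\<close> walk] by blast
  obtain j where "j \<le> N" "snd (ps ! j) = snd w"
    using cart_walk_meets_snd[OF assms(3,4) ends \<open>ps ! 0 \<noteq> ps ! N\<close> walk] by blast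
  have "(Inl (fst (ps ! 0)), Inl (fst w)) \<in> (coord_rel X)\<^sup>*"
    using coord_rel_walk[where f = "(!) ps", OF inX walk \<open>i \<le> N\<close>] \<open>fst (ps ! i) = fst w\<close> by simp
  moreover have "(Inl (fst (ps ! 0)), Inr (snd w)) \<in> (coord_rel X)\<^sup>*"
    using coord_rel_walk[where f = "(!) ps", OF inX walk \<open>j \<le> N\<close>]
      coord_rel_pairI(1)[OF inX[OF \<open>j \<le> N\<close>]] \<open>snd (ps ! j) = snd w\<close>
    by (metis rtrancl_into_rtrancl)
  ultimately show ?thesis
    by (metis coord_rel_rtrancl_sym rtrancl_trans)
qed

lemma cycle_convex_coord_closure:
  assumes "simple_graph V1 E1" and "\<nexists>cs. is_cycle E1 cs"
    and "simple_graph V2 E2" and "\<nexists>cs. is_cycle E2 cs"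
  shows "cycle_convex (V1 \<times> V2) (cart_adj E1 E2)
           {x \<in> V1 \<times> V2. (Inl (fst x), Inr (snd x)) \<in> (coord_rel S)\<^sup>*}"
    (is "cycle_convex _ _ ?X")
proof -
  have "coord_rel ?X \<subseteq> (coord_rel S)\<^sup>*"
  proof
    fix e assume "e \<in> coord_rel ?X"
    then obtain a b where "(Inl a, Inr b) \<in> (coord_rel S)\<^sup>*"
      and "e = (Inl a, Inr b) \<or> e = (Inr b, Inl a)"
      unfolding coord_rel_def by auto
    then show "e \<in> (coord_rel S)\<^sup>*"
      using coord_rel_rtrancl_sym by auto
  qed
  then have "(coord_rel ?X)\<^sup>* \<subseteq> (coord_rel S)\<^sup>*"
    by (rule rtrancl_subset_rtrancl)
  then have "w \<in> ?X" if "w \<in> V1 \<times> V2" "is_cycle (cart_adj E1 E2) cs"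
      "set cs \<subseteq> insert w ?X" "w \<in> set cs" for w cs
    using that coord_rel_connects_cycle_vertex[OF assms that(2,4,3)] by blast
  then show ?thesis
    unfolding cycle_convex_def cycle_interval_def by auto
qed

lemma card_le_Suc_card_edges:
  fixes R :: "'v rel" and ends :: "'e \<Rightarrow> 'v set"
  assumes "finite S" and "r \<in> U"
    and edge: "\<And>x y. (x, y) \<in> R \<Longrightarrow> \<exists>e\<in>S. ends e = {x, y}"
    and reach: "\<And>u. u \<in> U \<Longrightarrow> (u, r) \<in> R\<^sup>*"
  shows "card U \<le> Suc (card S)"
proof -
  \<comment> \<open>Each \<open>u \<noteq> r\<close> picks an edge to a vertex closer to \<open>r\<close>; two vertices picking the
    same edge would each be closer to \<open>r\<close> than the other.\<close>
  define d where "d u = (LEAST n. (u, r) \<in> R ^^ n)" for u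
  have "\<exists>e\<in>S. \<exists>y. ends e = {u, y} \<and> d y < d u" if "u \<in> U - {r}" for u
  proof -
    have "(u, r) \<in> R ^^ d u"
      unfolding d_def using reach[of u] that by (metis LeastI rtrancl_power DiffD1)
    moreover have "d u \<noteq> 0"
      using calculation that by (cases "d u") auto
    ultimately obtain y where "(u, y) \<in> R" and "(y, r) \<in> R ^^ (d u - 1)"
      by (metis Suc_pred' bot_nat_0.not_eq_extremum relpow_Suc_D2)
    moreover have "d y \<le> d u - 1"
      unfolding d_def[of y] using calculation(2) by (rule Least_le)
    ultimately show ?thesis
      using edge \<open>d u \<noteq> 0\<close> by fastforce
  qed
  then obtain pick where pick: "\<And>u. u \<in> U - {r} \<Longrightarrow>
      pick u \<in> S \<and> (\<exists>y. ends (pick u) = {u, y} \<and> d y < d u)"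
    by metis
  have "inj_on pick (U - {r})"
  proof (rule inj_onI)
    fix u u' assume "u \<in> U - {r}" "u' \<in> U - {r}" "pick u = pick u'"
    then obtain y y' where "{u, y} = {u', y'}" "d y < d u" "d y' < d u'"
      using pick by metis
    then show "u = u'"
      by (metis doubleton_eq_iff less_asym)
  qed
  then have "card (U - {r}) \<le> card S"
    using pick \<open>finite S\<close> by (intro card_inj_on_le) auto
  moreover have "card (U - {r}) = card U - 1"
    using \<open>r \<in> U\<close> by (simp add: card_Diff_singleton_if)
  ultimately show ?thesis
    by linarith
qed

lemma hull_set_coord_connected:
  assumes "is_tree V1 E1" and "is_tree V2 E2"
    and hull: "cc_hull_set (V1 \<times> V2) (cart_adj E1 E2) S" and "a \<in> V1" and "b \<in> V2"
  shows "(Inl a, Inr b) \<in> (coord_rel S)\<^sup>*"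
proof -
  let ?X = "{x \<in> V1 \<times> V2. (Inl (fst x), Inr (snd x)) \<in> (coord_rel S)\<^sup>*}"
  have "S \<subseteq> V1 \<times> V2"
    using hull unfolding cc_hull_set_def by simp
  then have "S \<subseteq> ?X"
    using coord_rel_pairI(1) by blast
  moreover have "cycle_convex (V1 \<times> V2) (cart_adj E1 E2) ?X"
    using assms(1,2) by (intro cycle_convex_coord_closure) (auto simp: is_tree_def)
  ultimately have "V1 \<times> V2 \<subseteq> ?X"
    by (rule cc_hull_setD[OF hull])
  then show ?thesis
    using assms(4,5) by auto
qed

lemma hull_set_card_ge:
  assumes "is_tree V1 E1" and "is_tree V2 E2"
    and hull: "cc_hull_set (V1 \<times> V2) (cart_adj E1 E2) S"
  shows "card V1 + card V2 \<le> Suc (card S)"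
proof -
  obtain a0 b0 where "a0 \<in> V1" "b0 \<in> V2"
    using is_tree_nonempty[OF assms(1)] is_tree_nonempty[OF assms(2)] by blast
  note conn = hull_set_coord_connected[OF assms]
  have to_a0: "(Inr b, Inl a0) \<in> (coord_rel S)\<^sup>*" if "b \<in> V2" for b
    using conn[OF \<open>a0 \<in> V1\<close> that] by (rule coord_rel_rtrancl_sym)
  have "card (V1 <+> V2) \<le> Suc (card S)"
  proof (rule card_le_Suc_card_edges)
    have "S \<subseteq> V1 \<times> V2"
      using hull unfolding cc_hull_set_def by simp
    then show "finite S"
      using is_tree_finite[OF assms(1)] is_tree_finite[OF assms(2)] finite_subset by blast
    show "Inl a0 \<in> V1 <+> V2"
      using \<open>a0 \<in> V1\<close> by (rule InlI)
    show "\<exists>x\<in>S. (\<lambda>(a, b). {Inl a, Inr b}) x = {u, v}" if "(u, v) \<in> coord_rel S" for u v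
      using that unfolding coord_rel_def by auto
    fix u assume "u \<in> V1 <+> V2"
    then consider a where "a \<in> V1" "u = Inl a" | b where "b \<in> V2" "u = Inr b"
      by blast
    then show "(u, Inl a0) \<in> (coord_rel S)\<^sup>*"
    proof cases
      case 1
      then show ?thesis
        using conn[OF _ \<open>b0 \<in> V2\<close>] to_a0[OF \<open>b0 \<in> V2\<close>] by (metis rtrancl_trans)
    next
      case 2
      then show ?thesis
        using to_a0 by simp
    qed
  qed
  then show ?thesis
    using is_tree_finite[OF assms(1)] is_tree_finite[OF assms(2)] by (simp add: card_Plus)
qed

theorem mainTheorem11:
  fixes V1 :: "'a set" and E1 :: "'a \<Rightarrow> 'a \<Rightarrow> bool"
    and V2 :: "'b set" and E2 :: "'b \<Rightarrow> 'b \<Rightarrow> bool"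
    and m n :: nat
  assumes "is_tree V1 E1" and "is_tree V2 E2"
    and "card V1 = m" and "card V2 = n"
    and "m \<ge> 2" and "n \<ge> 2"
  shows "hn_cc (V1 \<times> V2) (cart_adj E1 E2) = m + n - 1"
proof -
  obtain a0 b0 where "a0 \<in> V1" "b0 \<in> V2"
    using is_tree_nonempty[OF assms(1)] is_tree_nonempty[OF assms(2)] by blast
  show ?thesis
    unfolding hn_cc_def
  proof (rule Least_equality)
    show "\<exists>S. cc_hull_set (V1 \<times> V2) (cart_adj E1 E2) S \<and> card S = m + n - 1"
      using cross_hull_set[OF assms(1,2) \<open>a0 \<in> V1\<close> \<open>b0 \<in> V2\<close>]
        card_cross[OF is_tree_finite[OF assms(1)] is_tree_finite[OF assms(2)] \<open>a0 \<in> V1\<close> \<open>b0 \<in> V2\<close>]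
        assms(3,4) by blast
    show "m + n - 1 \<le> k" if "\<exists>S. cc_hull_set (V1 \<times> V2) (cart_adj E1 E2) S \<and> card S = k" for k
      using that hull_set_card_ge[OF assms(1,2)] assms(3,4) by fastforce
  qed
qed

end
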